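(* Let $X_1,X_2$ be weakly regular random variables, and for $i=1,2$ let $f_i$ be the density of $X_i$, $G_i(t)=\mathbb{P}[X_i\ge t]$, $H_i(t)=\int_0^tG_i(u)\,\mathrm{d}u$, $r_i=\sup_{p\ge0}p\,\mathbb{P}[X_i\ge p]$, and $K_1(t)=f_2(t)(H_1(t)-r_1)-G_1(t)G_2(t)$, $K_2(t)=f_1(t)(H_2(t)-r_2)-G_1(t)G_2(t)$. Then for $i=1,2$ and all $u\ge0$: if $K_i(u)>0$ then $K_i(v)\ge0$ for all $v>u$.
   Context: A random variable $X\ge0$ is weakly regular if its support is an interval $[\alpha,\beta]$ with $0\le\alpha<\beta\le\infty$ (meaning $[\alpha,\infty)$ if $\beta=\infty$), on which it has a positive continuous density $f$ (and density $0$ outside), such that the virtual valuation $t-G(t)/f(t)$ is nondecreasing on the support, where $G(t)=\mathbb{P}[X\ge t]$. *)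

theory Defs
  imports "HOL-Probability.Probability"
begin

definition surv :: "'a measure \<Rightarrow> ('a \<Rightarrow> real) \<Rightarrow> real \<Rightarrow> real" where
  "surv M X t = measure M {\<omega> \<in> space M. X \<omega> \<ge> t}"

definition Hfun :: "'a measure \<Rightarrow> ('a \<Rightarrow> real) \<Rightarrow> real \<Rightarrow> real" where
  "Hfun M X t = integral {0..t} (surv M X)"

definition rev_opt :: "'a measure \<Rightarrow> ('a \<Rightarrow> real) \<Rightarrow> real" where
  "rev_opt M X = (SUP p\<in>{0..}. p * surv M X p)"

definition weakly_regular :: "'a measure \<Rightarrow> ('a \<Rightarrow> real) \<Rightarrow> (real \<Rightarrow> real) \<Rightarrow> bool" where
  "weakly_regular M X f \<longleftrightarrow>
     prob_space M \<and>
     (AE \<omega> in M. X \<omega> \<ge> 0) \<and>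
     distributed M lborel X (\<lambda>x. ennreal (f x)) \<and>
     (\<exists>(\<alpha>::real) (\<beta>::ereal).
        0 \<le> \<alpha> \<and> ereal \<alpha> < \<beta> \<and>
        (let S = {t. \<alpha> \<le> t \<and> ereal t \<le> \<beta>} in
           (\<forall>t\<in>S. f t > 0) \<and> (\<forall>t. t \<notin> S \<longrightarrow> f t = 0) \<and>
           continuous_on S f \<and>
           mono_on S (\<lambda>t. t - surv M X t / f t)))"

definition K1 :: "'a measure \<Rightarrow> ('a \<Rightarrow> real) \<Rightarrow> 'b measure \<Rightarrow> ('b \<Rightarrow> real) \<Rightarrow> (real \<Rightarrow> real) \<Rightarrow> real \<Rightarrow> real" where
  "K1 M1 X1 M2 X2 f2 t = f2 t * (Hfun M1 X1 t - rev_opt M1 X1) - surv M1 X1 t * surv M2 X2 t"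

definition K2 :: "'a measure \<Rightarrow> ('a \<Rightarrow> real) \<Rightarrow> 'b measure \<Rightarrow> ('b \<Rightarrow> real) \<Rightarrow> (real \<Rightarrow> real) \<Rightarrow> real \<Rightarrow> real" where
  "K2 M1 X1 M2 X2 f1 t = f1 t * (Hfun M2 X2 t - rev_opt M2 X2) - surv M1 X1 t * surv M2 X2 t"

end

theory Submission
  imports Defs
begin

text \<open>Where f_b(t) > 0 we can write K(t) = f_b(t) (H_a(t) - r - G_a(t) \<phi>(t)) with
  \<phi> = G_b / f_b. Weak regularity of X_b says exactly that \<phi> grows by at most v - u
  from u to v inside the support, while H_a grows by at least (v - u) G_a(v) and G_a
  decreases; hence the bracket is nondecreasing on the support, and K keeps the sign of the
  bracket there. Beyond the support both f_b and G_b vanish, so K = 0.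
  The value of r plays no role.\<close>

lemma surv_nonneg: "0 \<le> surv M X t"
  by (simp add: surv_def)

lemma surv_antimono:
  assumes "prob_space M" "X \<in> borel_measurable M" "s \<le> t"
  shows "surv M X t \<le> surv M X s"
proof -
  interpret prob_space M by fact
  have "{\<omega> \<in> space M. s \<le> X \<omega>} \<in> sets M" using assms(2) by measurable
  then show ?thesis unfolding surv_def
    by (intro finite_measure_mono) (use assms(3) in auto)
qed

lemma Hfun_increment_ge:
  assumes "prob_space M" "X \<in> borel_measurable M" "0 \<le> u" "u \<le> v"
  shows "(v - u) * surv M X v \<le> Hfun M X v - Hfun M X u"
proof -
  have "mono_on {0..v} (\<lambda>t. - surv M X t)"
    by (auto simp: mono_on_def intro!: surv_antimono assms)
  then have "(\<lambda>t. - surv M X t) integrable_on {0..v}"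
    by (rule integrable_on_mono_on)
  then have int: "surv M X integrable_on {0..v}"
    using integrable_neg by fastforce
  have split: "Hfun M X v = Hfun M X u + integral {u..v} (surv M X)"
    unfolding Hfun_def using Henstock_Kurzweil_Integration.integral_combine[OF assms(3,4) int] by simp
  have "integral {u..v} (\<lambda>t. surv M X v) \<le> integral {u..v} (surv M X)"
    using integrable_on_subinterval[OF int] assms
    by (intro integral_le) (auto intro!: surv_antimono)
  then show ?thesis using split assms(4) by simp
qed

lemma Hfun_minus_surv_mult_mono:
  assumes "prob_space M" "X \<in> borel_measurable M" "0 \<le> u" "u \<le> v"
    and "0 \<le> c" "c' \<le> c + (v - u)"
  shows "Hfun M X u - surv M X u * c \<le> Hfun M X v - surv M X v * c'"
proof -
  have "surv M X v * c \<le> surv M X u * c"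
    using surv_antimono[OF assms(1,2,4)] assms(5) by (simp add: mult_right_mono)
  moreover have "surv M X v * c' \<le> surv M X v * c + (v - u) * surv M X v"
    using mult_left_mono[OF assms(6) surv_nonneg] by (simp add: algebra_simps)
  moreover note Hfun_increment_ge[OF assms(1-4)]
  ultimately show ?thesis by linarith
qed

lemma surv_eq_0_if_density_vanishes:
  assumes "distributed M lborel X (\<lambda>x. ennreal (f x))" "\<And>x. v \<le> x \<Longrightarrow> f x = 0"
  shows "surv M X v = 0"
proof -
  have "emeasure M (X -` {v..} \<inter> space M) = (\<integral>\<^sup>+x. ennreal (f x) * indicator {v..} x \<partial>lborel)"
    using distributed_emeasure[OF assms(1)] by simp
  also have "(\<lambda>x. ennreal (f x) * indicator {v..} x) = (\<lambda>x. 0)"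
    using assms(2) by (auto simp: indicator_def fun_eq_iff)
  finally have "emeasure M {\<omega> \<in> space M. v \<le> X \<omega>} = 0"
    by (simp add: vimage_def Int_def conj_commute)
  then show ?thesis unfolding surv_def by (simp add: measure_def)
qed

lemma weakly_regularE:
  assumes "weakly_regular M X f"
  obtains \<alpha> \<beta> where "distributed M lborel X (\<lambda>x. ennreal (f x))"
    "\<And>t. \<alpha> \<le> t \<Longrightarrow> ereal t \<le> \<beta> \<Longrightarrow> 0 < f t"
    "\<And>t. \<not> (\<alpha> \<le> t \<and> ereal t \<le> \<beta>) \<Longrightarrow> f t = 0"
    "\<And>s t. \<alpha> \<le> s \<Longrightarrow> s \<le> t \<Longrightarrow> ereal t \<le> \<beta>
        \<Longrightarrow> s - surv M X s / f s \<le> t - surv M X t / f t"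
proof -
  from assms obtain \<alpha> \<beta> where "distributed M lborel X (\<lambda>x. ennreal (f x))"
    "\<forall>t\<in>{t. \<alpha> \<le> t \<and> ereal t \<le> \<beta>}. 0 < f t"
    "\<forall>t. t \<notin> {t. \<alpha> \<le> t \<and> ereal t \<le> \<beta>} \<longrightarrow> f t = 0"
    "mono_on {t. \<alpha> \<le> t \<and> ereal t \<le> \<beta>} (\<lambda>t. t - surv M X t / f t)"
    unfolding weakly_regular_def Let_def by blast
  then show ?thesis
    by (intro that[of \<alpha> \<beta>]) (auto simp: mono_on_def order_trans[OF ereal_less_eq(3)[THEN iffD2]])
qed

lemma density_times_bracket:
  fixes f g h r G :: "'a :: field"
  assumes "f \<noteq> 0"
  shows "f * (h - r) - g * G = f * (h - r - g * (G / f))"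
  using assms by (simp add: right_diff_distrib mult.left_commute)

lemma pos_propagates_to_the_right:
  assumes "prob_space Ma" "Xa \<in> borel_measurable Ma" "weakly_regular Mb Xb fb"
    and "0 \<le> u" "u < v"
    and pos: "0 < fb u * (Hfun Ma Xa u - r) - surv Ma Xa u * surv Mb Xb u"
  shows "0 \<le> fb v * (Hfun Ma Xa v - r) - surv Ma Xa v * surv Mb Xb v"
proof -
  obtain \<alpha> \<beta> where dist: "distributed Mb lborel Xb (\<lambda>x. ennreal (fb x))"
    and in_supp: "\<And>t. \<alpha> \<le> t \<Longrightarrow> ereal t \<le> \<beta> \<Longrightarrow> 0 < fb t"
    and off_supp: "\<And>t. \<not> (\<alpha> \<le> t \<and> ereal t \<le> \<beta>) \<Longrightarrow> fb t = 0"
    and virtual_valuation_mono: "\<And>s t. \<alpha> \<le> s \<Longrightarrow> s \<le> t \<Longrightarrow> ereal t \<le> \<beta>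
        \<Longrightarrow> s - surv Mb Xb s / fb s \<le> t - surv Mb Xb t / fb t"
    using weakly_regularE[OF assms(3)] by metis
  have "fb u \<noteq> 0"
    using pos mult_nonneg_nonneg[OF surv_nonneg surv_nonneg, of Ma Xa u Mb Xb u] by auto
  then have u_supp: "\<alpha> \<le> u" "ereal u \<le> \<beta>" using off_supp by blast+
  show ?thesis
  proof (cases "ereal v \<le> \<beta>")
    case False
    then have "\<And>x. v \<le> x \<Longrightarrow> fb x = 0"
      using off_supp by (meson ereal_less_eq(3) order_trans)
    then show ?thesis using surv_eq_0_if_density_vanishes[OF dist] by simp
  next
    case True
    have fbu: "0 < fb u" and fbv: "0 < fb v" using in_supp u_supp True \<open>u < v\<close> by auto
    have "0 < Hfun Ma Xa u - r - surv Ma Xa u * (surv Mb Xb u / fb u)"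
      using pos fbu by (simp add: density_times_bracket zero_less_mult_iff)
    also have "\<dots> \<le> Hfun Ma Xa v - r - surv Ma Xa v * (surv Mb Xb v / fb v)"
      using Hfun_minus_surv_mult_mono[OF assms(1,2,4), of v "surv Mb Xb u / fb u" "surv Mb Xb v / fb v"]
        virtual_valuation_mono[of u v] u_supp(1) True fbu \<open>u < v\<close> surv_nonneg[of Mb Xb u]
      by simp
    finally show ?thesis
      using fbv by (simp add: density_times_bracket)
  qed
qed

theorem lemma3:
  fixes M1 :: "'a measure" and X1 :: "'a \<Rightarrow> real" and f1 :: "real \<Rightarrow> real"
    and M2 :: "'b measure" and X2 :: "'b \<Rightarrow> real" and f2 :: "real \<Rightarrow> real"
  assumes "weakly_regular M1 X1 f1" and "weakly_regular M2 X2 f2"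
  shows "(\<forall>u\<ge>0. K1 M1 X1 M2 X2 f2 u > 0 \<longrightarrow> (\<forall>v>u. K1 M1 X1 M2 X2 f2 v \<ge> 0))
       \<and> (\<forall>u\<ge>0. K2 M1 X1 M2 X2 f1 u > 0 \<longrightarrow> (\<forall>v>u. K2 M1 X1 M2 X2 f1 v \<ge> 0))"
proof -
  have "prob_space M1" "X1 \<in> borel_measurable M1" "prob_space M2" "X2 \<in> borel_measurable M2"
    using assms unfolding weakly_regular_def by (auto dest: distributed_measurable)
  then show ?thesis
    using pos_propagates_to_the_right[of M1 X1 M2 X2 f2] pos_propagates_to_the_right[of M2 X2 M1 X1 f1]
      assms
    unfolding K1_def K2_def by (auto simp: mult.commute)
qed

end
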